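(* Let $b,c,d$ be positive integers with $c/d\le b$, let $C$ be a non-empty set and $\|\cdot\|:\mathcal P(C)\setminus\{\emptyset\}\to\mathbb R_{\ge0}$. If $(C,\|\cdot\|)$ is $b$-big, then $(C,\|\cdot\|)$ is $(c,d)$-big.
   Context: $(C,\|\cdot\|)$ is $b$-big if for every non-empty $X\subseteq C$ and every colouring $\chi:X\to b$ there is a non-empty $Y\subseteq X$ on which $\chi$ is constant and $\|Y\|\ge\|X\|-1$. $(C,\|\cdot\|)$ is $(c,d)$-big if for every non-empty $X\subseteq C$ and every colouring $\chi:X\to c$ there is a non-empty $Y\subseteq X$ with $|\mathrm{ran}(\chi\restriction Y)|\le d$ and $\|Y\|\ge\|X\|-1$. *)

theory Defs
  imports Complex_Main
begin

text \<open>A colouring \<chi> : X \<rightarrow> b is a function with values in {0,...,b-1} on X.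
  The measure nm is only meaningful on non-empty subsets of C.\<close>

definition b_big :: "'a set \<Rightarrow> ('a set \<Rightarrow> real) \<Rightarrow> nat \<Rightarrow> bool" where
  "b_big C nm b \<longleftrightarrow>
     (\<forall>X \<chi>. X \<noteq> {} \<and> X \<subseteq> C \<and> (\<chi> :: 'a \<Rightarrow> nat) ` X \<subseteq> {..<b} \<longrightarrow>
        (\<exists>Y. Y \<noteq> {} \<and> Y \<subseteq> X \<and> (\<exists>i. \<forall>y\<in>Y. \<chi> y = i) \<and> nm Y \<ge> nm X - 1))"

definition cd_big :: "'a set \<Rightarrow> ('a set \<Rightarrow> real) \<Rightarrow> nat \<Rightarrow> nat \<Rightarrow> bool" where
  "cd_big C nm c d \<longleftrightarrow>
     (\<forall>X \<chi>. X \<noteq> {} \<and> X \<subseteq> C \<and> (\<chi> :: 'a \<Rightarrow> nat) ` X \<subseteq> {..<c} \<longrightarrow>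
        (\<exists>Y. Y \<noteq> {} \<and> Y \<subseteq> X \<and> card (\<chi> ` Y) \<le> d \<and> nm Y \<ge> nm X - 1))"

end

theory Submission
  imports Defs
begin

text \<open>Group the \<open>c \<le> b d\<close> colours into \<open>b\<close> blocks of \<open>d\<close> consecutive colours, colour \<open>k\<close>
  going to block \<open>k div d\<close>. Bigness for the \<open>b\<close>-colouring by blocks gives a large subset that
  lies in a single block, so it sees at most \<open>d\<close> of the original colours.\<close>

lemma div_image_lessThan:
  fixes f :: "'a \<Rightarrow> nat"
  assumes "f ` X \<subseteq> {..<c}" and "c \<le> b * d"
  shows "(\<lambda>x. f x div d) ` X \<subseteq> {..<b}"
proof
  fix z assume "z \<in> (\<lambda>x. f x div d) ` X"
  then obtain x where "x \<in> X" and z: "z = f x div d" by blast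
  then have "f x < b * d" using assms by fastforce
  then show "z \<in> {..<b}" using z by (simp add: less_mult_imp_div_less)
qed

lemma card_image_le_if_div_const:
  fixes f :: "'a \<Rightarrow> nat"
  assumes "d > 0" and "\<forall>y\<in>Y. f y div d = i"
  shows "card (f ` Y) \<le> d"
proof -
  have "f ` Y \<subseteq> {i * d..<i * d + d}"
  proof
    fix z assume "z \<in> f ` Y"
    then have "z div d = i" using assms(2) by blast
    then have "z = i * d + z mod d" using div_mult_mod_eq[of z d] by simp
    moreover have "z mod d < d" using assms(1) by simp
    ultimately show "z \<in> {i * d..<i * d + d}" by (simp only: atLeastLessThan_iff) linarith
  qed
  then have "card (f ` Y) \<le> card {i * d..<i * d + d}" by (rule card_mono[rotated]) simp
  then show ?thesis by simp
qed

lemma b_bigD: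
  fixes \<chi> :: "'a \<Rightarrow> nat"
  assumes "b_big C nm b" and "X \<noteq> {}" and "X \<subseteq> C" and "\<chi> ` X \<subseteq> {..<b}"
  obtains Y i where "Y \<noteq> {}" and "Y \<subseteq> X" and "\<forall>y\<in>Y. \<chi> y = i" and "nm Y \<ge> nm X - 1"
proof -
  have "\<exists>Y. Y \<noteq> {} \<and> Y \<subseteq> X \<and> (\<exists>i. \<forall>y\<in>Y. \<chi> y = i) \<and> nm Y \<ge> nm X - 1"
    using assms(1) unfolding b_big_def
    by (elim allE[of _ X] allE[of _ \<chi>] impE) (use assms(2-4) in simp_all)
  then show thesis using that by blast
qed

lemma cd_bigI:
  assumes "\<And>X (\<chi> :: 'a \<Rightarrow> nat). X \<noteq> {} \<Longrightarrow> X \<subseteq> C \<Longrightarrow> \<chi> ` X \<subseteq> {..<c} \<Longrightarrow>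
    \<exists>Y. Y \<noteq> {} \<and> Y \<subseteq> X \<and> card (\<chi> ` Y) \<le> d \<and> nm Y \<ge> nm X - 1"
  shows "cd_big C nm c d"
  unfolding cd_big_def using assms by simp

lemma b_big_imp_cd_big:
  assumes "b_big C nm b" and "d > 0" and "c \<le> b * d"
  shows "cd_big C nm c d"
proof (rule cd_bigI)
  fix X and \<chi> :: "'a \<Rightarrow> nat"
  assume "X \<noteq> {}" and "X \<subseteq> C" and "\<chi> ` X \<subseteq> {..<c}"
  moreover from \<open>\<chi> ` X \<subseteq> {..<c}\<close> have "(\<lambda>x. \<chi> x div d) ` X \<subseteq> {..<b}"
    using assms(3) by (rule div_image_lessThan)
  ultimately obtain Y i where Y: "Y \<noteq> {}" "Y \<subseteq> X" "nm Y \<ge> nm X - 1"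
    and block: "\<forall>y\<in>Y. \<chi> y div d = i"
    using b_bigD[OF assms(1)] by metis
  from assms(2) block have "card (\<chi> ` Y) \<le> d"
    by (rule card_image_le_if_div_const)
  with Y show "\<exists>Y. Y \<noteq> {} \<and> Y \<subseteq> X \<and> card (\<chi> ` Y) \<le> d \<and> nm Y \<ge> nm X - 1"
    by blast
qed

theorem lemma5p3:
  fixes b c d :: nat and C :: "'a set" and nm :: "'a set \<Rightarrow> real"
  assumes "b > 0" and "c > 0" and "d > 0"
    and "real c / real d \<le> real b"
    and "C \<noteq> {}"
    and "\<And>X. X \<subseteq> C \<Longrightarrow> X \<noteq> {} \<Longrightarrow> nm X \<ge> 0"
    and "b_big C nm b"
  shows "cd_big C nm c d"
proof -
  have "real c \<le> real b * real d"
    using assms(3,4) by (simp add: divide_le_eq)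
  then have "c \<le> b * d"
    by (metis of_nat_le_iff of_nat_mult)
  then show ?thesis
    by (rule b_big_imp_cd_big[OF assms(7,3)])
qed

end
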